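(* Let $\beta_0,\beta_1,\beta_2,\beta_3,\beta_4\in\mathbb{R}$, and put $$L^{+}:=\sqrt{(\beta_1+\beta_4)^2+(\beta_2-\beta_3)^2},\qquad L^{-}:=\sqrt{(\beta_1-\beta_4)^2+(\beta_2+\beta_3)^2}.$$ Let $\rho$ be a generalised two-qubit $X$-state of Group 2 of Type I with maximally-mixed subsystems ($\tau_1=\tau_2=0$) and these parameters, so that the eigenvalues of $\rho$ are $\tfrac14(1+\beta_0\pm L^{-})$, $\tfrac14(1-\beta_0\pm L^{+})$. Suppose $\rho$ is valid and entangled. Then $\beta_0<0$ if and only if $L^{+}>L^{-}$.
   Context: A two-qubit Hermitian $4\times4$ matrix $\rho$ of trace one is called valid if it is positive semidefinite. For a valid $\rho$, $\rho^{\Gamma}$ denotes its partial transpose (with respect to either qubit). $\rho$ is called separable if $\rho^{\Gamma}$ is positive semidefinite and entangled otherwise (PPT criterion). Group 2 $X$-states are two-qubit density matrices of the form $\rho=\tfrac14(I\otimes I+\sum_{q}c_q\,q)$, where $q$ ranges over the seven nontrivial Pauli operators commuting with a fixed operator $A\otimes B$ with $A,B\in\{X,Y,Z\}$. Example: for $A\otimes B=Z\otimes Z$, $\rho=\tfrac14(I\otimes I+\tau_1 Z\otimes I+\tau_2 I\otimes Z+\beta_0 Z\otimes Z+\beta_1 X\otimes X+\beta_2 X\otimes Y+\beta_3 Y\otimes X+\beta_4 Y\otimes Y)$. In general $\tau_1,\tau_2$ are the coefficients of the two local operators, $\beta_0$ is the coefficient of the correlation operator sharing no tensor factor with the other correlation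 operators, and $\beta_1,\beta_2,\beta_3,\beta_4$ are the entries of the remaining $2\times2$ block $\begin{pmatrix}\beta_1&\beta_2\\ \beta_3&\beta_4\end{pmatrix}$ of the correlation matrix. "Maximally-mixed subsystems" means $\tau_1=\tau_2=0$. Such a state with $\tau_1=\tau_2=0$ is of Type I if the eigenvalues of $\rho$ are $\tfrac14(1+\beta_0\pm L^{-})$ and $\tfrac14(1-\beta_0\pm L^{+})$, and the eigenvalues of $\rho^{\Gamma}$ are $\tfrac14(1+\beta_0\pm L^{+})$ and $\tfrac14(1-\beta_0\pm L^{-})$. The $Z\otimes Z$ example above is of Type I. *)

theory Defs
  imports "Jordan_Normal_Form.Matrix" "Jordan_Normal_Form.Char_Poly" "HOL-Library.Multiset"
begin

text \<open>Single-qubit Pauli matrices: index 0 = I, 1 = X, 2 = Y, 3 = Z.\<close>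
definition pauli :: "nat \<Rightarrow> complex mat" where
  "pauli k = (if k = 1 then mat_of_rows_list 2 [[0, 1], [1, 0]]
              else if k = 2 then mat_of_rows_list 2 [[0, -\<i>], [\<i>, 0]]
              else if k = 3 then mat_of_rows_list 2 [[1, 0], [0, -1]]
              else mat_of_rows_list 2 [[1, 0], [0, 1]])"

text \<open>Kronecker product of two 2x2 matrices (basis order |00>,|01>,|10>,|11>).\<close>
definition kron2 :: "complex mat \<Rightarrow> complex mat \<Rightarrow> complex mat" where
  "kron2 A B = mat 4 4 (\<lambda>(i, j). A $$ (i div 2, j div 2) * B $$ (i mod 2, j mod 2))"

definition pp :: "nat \<Rightarrow> nat \<Rightarrow> complex mat" where
  "pp a b = kron2 (pauli a) (pauli b)"

definition nxt :: "nat \<Rightarrow> nat" where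
  "nxt k = k mod 3 + 1"

text \<open>The remaining correlation block is indexed by the two Paulis other than A
  (resp. B), in cyclic order after A (resp. B); for A (x) B = Z (x) Z this gives
  rows X, Y and columns X, Y, as in the paper's example.\<close>
definition group2_state ::
  "nat \<Rightarrow> nat \<Rightarrow> real \<Rightarrow> real \<Rightarrow> real \<Rightarrow> real \<Rightarrow> real \<Rightarrow> real \<Rightarrow> real \<Rightarrow> complex mat" where
  "group2_state a b t1 t2 b0 b1 b2 b3 b4 =
     (let p1 = nxt a; p2 = nxt (nxt a); q1 = nxt b; q2 = nxt (nxt b) in
      (1/4 :: complex) \<cdot>\<^sub>m
        (pp 0 0 + complex_of_real t1 \<cdot>\<^sub>m pp a 0 + complex_of_real t2 \<cdot>\<^sub>m pp 0 b
         + complex_of_real b0 \<cdot>\<^sub>m pp a b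
         + complex_of_real b1 \<cdot>\<^sub>m pp p1 q1 + complex_of_real b2 \<cdot>\<^sub>m pp p1 q2
         + complex_of_real b3 \<cdot>\<^sub>m pp p2 q1 + complex_of_real b4 \<cdot>\<^sub>m pp p2 q2))"

text \<open>Partial transpose with respect to the second qubit.\<close>
definition partial_transpose :: "complex mat \<Rightarrow> complex mat" where
  "partial_transpose R = mat 4 4 (\<lambda>(i, j).
      R $$ (2 * (i div 2) + j mod 2, 2 * (j div 2) + i mod 2))"

definition hermitian :: "complex mat \<Rightarrow> bool" where
  "hermitian A \<longleftrightarrow> (\<forall>i<dim_row A. \<forall>j<dim_col A. A $$ (i, j) = cnj (A $$ (j, i)))"

definition psd :: "complex mat \<Rightarrow> bool" where
  "psd A \<longleftrightarrow> dim_row A = dim_col A \<and> hermitian A \<and>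
     (\<forall>v \<in> carrier_vec (dim_row A).
        Im (conjugate v \<bullet> (A *\<^sub>v v)) = 0 \<and> Re (conjugate v \<bullet> (A *\<^sub>v v)) \<ge> 0)"

definition mtrace :: "complex mat \<Rightarrow> complex" where
  "mtrace A = (\<Sum>i<dim_row A. A $$ (i, i))"

definition valid_state :: "complex mat \<Rightarrow> bool" where
  "valid_state R \<longleftrightarrow> R \<in> carrier_mat 4 4 \<and> hermitian R \<and> mtrace R = 1 \<and> psd R"

definition separable :: "complex mat \<Rightarrow> bool" where
  "separable R \<longleftrightarrow> psd (partial_transpose R)"

definition entangled :: "complex mat \<Rightarrow> bool" where
  "entangled R \<longleftrightarrow> \<not> psd (partial_transpose R)"

definition has_eigenvalues :: "complex mat \<Rightarrow> complex multiset \<Rightarrow> bool" where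
  "has_eigenvalues A M \<longleftrightarrow> char_poly A = prod_mset (image_mset (\<lambda>x. [:- x, 1:]) M)"

definition Lplus :: "real \<Rightarrow> real \<Rightarrow> real \<Rightarrow> real \<Rightarrow> real" where
  "Lplus b1 b2 b3 b4 = sqrt ((b1 + b4)^2 + (b2 - b3)^2)"

definition Lminus :: "real \<Rightarrow> real \<Rightarrow> real \<Rightarrow> real \<Rightarrow> real" where
  "Lminus b1 b2 b3 b4 = sqrt ((b1 - b4)^2 + (b2 + b3)^2)"

text \<open>Type I (for maximally mixed subsystems): prescribed spectra of rho and rho^Gamma.\<close>
definition typeI :: "complex mat \<Rightarrow> real \<Rightarrow> real \<Rightarrow> real \<Rightarrow> real \<Rightarrow> real \<Rightarrow> bool" where
  "typeI R b0 b1 b2 b3 b4 \<longleftrightarrow>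
     (let Lp = Lplus b1 b2 b3 b4; Lm = Lminus b1 b2 b3 b4 in
      has_eigenvalues R (image_mset complex_of_real
        {# (1 + b0 + Lm)/4, (1 + b0 - Lm)/4, (1 - b0 + Lp)/4, (1 - b0 - Lp)/4 #}) \<and>
      has_eigenvalues (partial_transpose R) (image_mset complex_of_real
        {# (1 + b0 + Lp)/4, (1 + b0 - Lp)/4, (1 - b0 + Lm)/4, (1 - b0 - Lm)/4 #}))"

end

theory Submission
  imports Defs
begin

(* Two eigenvalues of rho are (1 + beta0 - L-)/4 and (1 - beta0 - L+)/4, so validity gives
   L- <= 1 + beta0 and L+ <= 1 - beta0.  In a suitable basis 16 rho^Gamma is the direct sum of
   the 2x2 blocks [[1 + beta0, z+], [cnj z+, 1 + beta0]] and [[1 - beta0, z-], [cnj z-, 1 - beta0]],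
   where z+ = zeta_plus and z- = zeta_minus have moduli L+ and L-.  Hence rho^Gamma is positive
   semidefinite as soon as L+ <= 1 + beta0 and L- <= 1 - beta0, and entanglement forces
   L+ > 1 + beta0 or L- > 1 - beta0.  In the first case L- <= 1 + beta0 < L+ <= 1 - beta0, so
   beta0 < 0 and L+ > L-; the second case is symmetric, with beta0 > 0 and L+ < L-. *)

lemma hermitianI:
  assumes "A \<in> carrier_mat n n" "\<And>i j. i < n \<Longrightarrow> j < n \<Longrightarrow> A $$ (i, j) = cnj (A $$ (j, i))"
  shows "hermitian A"
  unfolding hermitian_def carrier_matD[OF assms(1)] using assms(2) by blast

lemma hermitianD:
  assumes "hermitian A" "A \<in> carrier_mat n n" "i < n" "j < n"
  shows "A $$ (i, j) = cnj (A $$ (j, i))"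
  using assms(1,3,4) unfolding hermitian_def carrier_matD[OF assms(2)] by blast

lemma hermitian_add:
  assumes "hermitian A" "hermitian B" "A \<in> carrier_mat n n" "B \<in> carrier_mat n n"
  shows "hermitian (A + B)"
proof (rule hermitianI)
  show "A + B \<in> carrier_mat n n"
    using assms by simp
  fix i j assume "i < n" "j < n"
  then show "(A + B) $$ (i, j) = cnj ((A + B) $$ (j, i))"
    using assms hermitianD[OF assms(1,3), of j i] hermitianD[OF assms(2,4), of j i] by simp
qed

lemma hermitian_smult:
  assumes "hermitian A" "A \<in> carrier_mat n n" "cnj c = c"
  shows "hermitian (c \<cdot>\<^sub>m A)"
proof (rule hermitianI)
  show "c \<cdot>\<^sub>m A \<in> carrier_mat n n"
    using assms by simp
  fix i j assume "i < n" "j < n"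
  then show "(c \<cdot>\<^sub>m A) $$ (i, j) = cnj ((c \<cdot>\<^sub>m A) $$ (j, i))"
    using assms hermitianD[OF assms(1,2), of j i] by simp
qed

lemma psdI:
  assumes "A \<in> carrier_mat n n" "hermitian A"
    and "\<And>v. v \<in> carrier_vec n \<Longrightarrow> 0 \<le> conjugate v \<bullet> (A *\<^sub>v v)"
  shows "psd A"
  using assms unfolding psd_def less_eq_complex_def by auto

lemma quadratic_form_eq_sum:
  assumes "v \<in> carrier_vec n" "A \<in> carrier_mat n n"
  shows "conjugate v \<bullet> (A *\<^sub>v v) = (\<Sum>i<n. \<Sum>j<n. cnj (v $ i) * A $$ (i, j) * v $ j)"
  using assms
  by (auto simp: scalar_prod_def mult_mat_vec_def sum_distrib_left mult.assoc lessThan_atLeast0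
      intro!: sum.cong)

lemma sum_lessThan_4: "(\<Sum>i<(4::nat). f i) = f 0 + f 1 + f 2 + (f 3 :: 'a :: comm_monoid_add)"
  by (simp add: eval_nat_numeral)

lemma eigenvalue_if_has_eigenvalues:
  assumes "A \<in> carrier_mat n n" "has_eigenvalues A M" "x \<in># M"
  shows "eigenvalue A x"
proof -
  have "[:- x, 1:] dvd char_poly A"
    using assms(2,3) unfolding has_eigenvalues_def by (simp add: dvd_prod_mset)
  then show ?thesis
    using eigenvalue_root_char_poly[OF assms(1)] by (simp add: poly_eq_0_iff_dvd)
qed

lemma eigenvalue_nonneg_if_psd:
  assumes "psd A" "A \<in> carrier_mat n n" "eigenvalue A \<mu>"
  shows "0 \<le> \<mu>"
proof -
  obtain v where v: "v \<in> carrier_vec n" "v \<noteq> 0\<^sub>v n" "A *\<^sub>v v = \<mu> \<cdot>\<^sub>v v"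
    using assms(2,3) unfolding eigenvalue_def eigenvector_def by auto
  have "0 < conjugate v \<bullet> v"
    using conjugate_square_greater_0_vec[OF v(1)] conjugate_vec_sprod_comm[OF v(1) v(1)] v(2)
    by simp
  moreover have "0 \<le> \<mu> * (conjugate v \<bullet> v)"
    using assms(1,2) v unfolding psd_def less_eq_complex_def by auto
  ultimately show ?thesis
    by (auto simp: less_eq_complex_def less_complex_def zero_le_mult_iff)
qed

definition hermitian2_form :: "real \<Rightarrow> complex \<Rightarrow> complex \<Rightarrow> complex \<Rightarrow> complex" where
  "hermitian2_form d z p q =
    d * (cnj p * p) + z * (cnj p * q) + cnj z * (cnj q * p) + d * (cnj q * q)"

lemma hermitian2_form_nonneg:
  assumes "cmod z \<le> d"
  shows "0 \<le> hermitian2_form d z p q"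
proof -
  define s where "s = z * (cnj p * q)"
  have form_eq:
    "hermitian2_form d z p q = complex_of_real (d * (cmod p)\<^sup>2 + d * (cmod q)\<^sup>2 + 2 * Re s)"
  proof -
    have "cnj z * (cnj q * p) = cnj s"
      unfolding s_def by (simp add: mult.commute)
    moreover have "cnj w * w = complex_of_real ((cmod w)\<^sup>2)" for w
      using complex_norm_square[of w] by (simp add: mult.commute)
    ultimately show ?thesis
      unfolding hermitian2_form_def s_def[symmetric] using complex_add_cnj[of s]
      by (simp add: algebra_simps)
  qed
  have "2 * (cmod z * cmod p * cmod q) \<le> d * (cmod p)\<^sup>2 + d * (cmod q)\<^sup>2"
  proof -
    have "0 \<le> (d - cmod z) * ((cmod p)\<^sup>2 + (cmod q)\<^sup>2) + cmod z * (cmod p - cmod q)\<^sup>2"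
      using assms by (intro add_nonneg_nonneg mult_nonneg_nonneg) auto
    then show ?thesis
      by (simp add: algebra_simps power2_eq_square)
  qed
  moreover have "- (cmod z * cmod p * cmod q) \<le> Re s"
    using abs_Re_le_cmod[of s] unfolding s_def by (simp add: norm_mult)
  ultimately show ?thesis
    unfolding form_eq by (simp add: less_eq_complex_def)
qed

lemma pauli_carrier [simp]: "pauli k \<in> carrier_mat 2 2"
  unfolding pauli_def by (auto simp: mat_of_rows_list_def)

lemma pauli_entries:
  "pauli 0 $$ (0,0) = 1" "pauli 0 $$ (0,1) = 0" "pauli 0 $$ (1,0) = 0" "pauli 0 $$ (1,1) = 1"
  "pauli 1 $$ (0,0) = 0" "pauli 1 $$ (0,1) = 1" "pauli 1 $$ (1,0) = 1" "pauli 1 $$ (1,1) = 0"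
  "pauli 2 $$ (0,0) = 0" "pauli 2 $$ (0,1) = -\<i>" "pauli 2 $$ (1,0) = \<i>" "pauli 2 $$ (1,1) = 0"
  "pauli 3 $$ (0,0) = 1" "pauli 3 $$ (0,1) = 0" "pauli 3 $$ (1,0) = 0" "pauli 3 $$ (1,1) = -1"
  by (simp_all add: pauli_def mat_of_rows_list_def)

(* The simplifier writes some indices and Pauli labels as Suc 0 rather than 1. *)
lemmas pauli_entries_Suc = pauli_entries[unfolded One_nat_def]

lemma hermitian_pauli: "hermitian (pauli k)"
proof (rule hermitianI[OF pauli_carrier])
  fix i j :: nat assume "i < 2" "j < 2"
  then show "pauli k $$ (i, j) = cnj (pauli k $$ (j, i))"
    by (auto simp: pauli_def mat_of_rows_list_def less_2_cases_iff)
qed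

lemma hermitian_kron2:
  assumes "hermitian A" "hermitian B" "A \<in> carrier_mat 2 2" "B \<in> carrier_mat 2 2"
  shows "hermitian (kron2 A B)"
proof (rule hermitianI)
  show "kron2 A B \<in> carrier_mat 4 4"
    unfolding kron2_def by simp
  fix i j :: nat assume "i < 4" "j < 4"
  then have "i div 2 < 2" "j div 2 < 2" "i mod 2 < 2" "j mod 2 < 2"
    by auto
  then show "kron2 A B $$ (i, j) = cnj (kron2 A B $$ (j, i))"
    using \<open>i < 4\<close> \<open>j < 4\<close> hermitianD[OF assms(1,3), of "j div 2" "i div 2"]
      hermitianD[OF assms(2,4), of "j mod 2" "i mod 2"]
    unfolding kron2_def by simp
qed

lemma pp_carrier [simp]: "pp a b \<in> carrier_mat 4 4"
  unfolding pp_def kron2_def by simp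

lemma pp_index:
  "i < 4 \<Longrightarrow> j < 4 \<Longrightarrow>
    pp a b $$ (i, j) = pauli a $$ (i div 2, j div 2) * pauli b $$ (i mod 2, j mod 2)"
  unfolding pp_def kron2_def by simp

lemma hermitian_pp: "hermitian (pp a b)"
  unfolding pp_def by (intro hermitian_kron2 hermitian_pauli pauli_carrier)

lemma nxt_simps: "nxt 1 = 2" "nxt 2 = 3" "nxt 3 = 1" "nxt (Suc 0) = 2"
  by (simp_all add: nxt_def)

lemma group2_state_carrier [simp]: "group2_state a b t1 t2 b0 b1 b2 b3 b4 \<in> carrier_mat 4 4"
  unfolding group2_state_def Let_def by simp

lemma group2_state_index:
  assumes "i < 4" "j < 4"
  shows "group2_state a b t1 t2 b0 b1 b2 b3 b4 $$ (i, j) =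
    1/4 * (pp 0 0 $$ (i, j) + t1 * pp a 0 $$ (i, j) + t2 * pp 0 b $$ (i, j) + b0 * pp a b $$ (i, j)
      + b1 * pp (nxt a) (nxt b) $$ (i, j) + b2 * pp (nxt a) (nxt (nxt b)) $$ (i, j)
      + b3 * pp (nxt (nxt a)) (nxt b) $$ (i, j) + b4 * pp (nxt (nxt a)) (nxt (nxt b)) $$ (i, j))"
  using assms unfolding group2_state_def Let_def by (simp add: carrier_matD[OF pp_carrier])

lemma hermitian_group2_state: "hermitian (group2_state a b t1 t2 b0 b1 b2 b3 b4)"
  unfolding group2_state_def Let_def
  by (intro hermitian_smult[where n = 4] hermitian_add[where n = 4] hermitian_pp; simp)

lemma partial_transpose_carrier [simp]: "partial_transpose R \<in> carrier_mat 4 4"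
  unfolding partial_transpose_def by simp

lemma partial_transpose_index:
  "i < 4 \<Longrightarrow> j < 4 \<Longrightarrow>
    partial_transpose R $$ (i, j) = R $$ (2 * (i div 2) + j mod 2, 2 * (j div 2) + i mod 2)"
  unfolding partial_transpose_def by simp

lemma hermitian_partial_transpose:
  assumes "hermitian R" "R \<in> carrier_mat 4 4"
  shows "hermitian (partial_transpose R)"
proof (rule hermitianI[OF partial_transpose_carrier])
  fix i j :: nat assume "i < 4" "j < 4"
  then have "2 * (i div 2) + j mod 2 < 4" "2 * (j div 2) + i mod 2 < 4"
    by presburger+
  then show "partial_transpose R $$ (i, j) = cnj (partial_transpose R $$ (j, i))"
    using \<open>i < 4\<close> \<open>j < 4\<close>
      hermitianD[OF assms, of "2 * (j div 2) + i mod 2" "2 * (i div 2) + j mod 2"]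
    by (simp add: partial_transpose_index)
qed

lemmas partial_transpose_group2_state_entries =
  partial_transpose_index group2_state_index pp_index pauli_entries pauli_entries_Suc nxt_simps

definition zeta_plus :: "real \<Rightarrow> real \<Rightarrow> real \<Rightarrow> real \<Rightarrow> complex" where
  "zeta_plus b1 b2 b3 b4 = Complex (b1 + b4) (b2 - b3)"

definition zeta_minus :: "real \<Rightarrow> real \<Rightarrow> real \<Rightarrow> real \<Rightarrow> complex" where
  "zeta_minus b1 b2 b3 b4 = Complex (b1 - b4) (- b2 - b3)"

lemma cmod_zeta_plus: "cmod (zeta_plus b1 b2 b3 b4) = Lplus b1 b2 b3 b4"
  unfolding zeta_plus_def Lplus_def by (simp add: cmod_def)

lemma cmod_zeta_minus: "cmod (zeta_minus b1 b2 b3 b4) = Lminus b1 b2 b3 b4"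
  unfolding zeta_minus_def Lminus_def by (simp add: cmod_def power2_eq_square algebra_simps)

(* The four linear forms are the coordinates of v in a basis in which 16 rho^Gamma is
   block diagonal with the two blocks of hermitian2_form. *)
lemma quadratic_form_partial_transpose_XX:
  assumes "v \<in> carrier_vec 4"
  shows "16 * (conjugate v \<bullet> (partial_transpose (group2_state 1 1 0 0 b0 b1 b2 b3 b4) *\<^sub>v v)) =
    hermitian2_form (1 + b0) (zeta_plus b1 b2 b3 b4)
      (v$0 + v$1 + v$2 + v$3) (v$0 - v$1 - v$2 + v$3) +
    hermitian2_form (1 - b0) (zeta_minus b1 b2 b3 b4)
      (v$0 - v$1 + v$2 - v$3) (- v$0 - v$1 + v$2 + v$3)"
  unfolding quadratic_form_eq_sum[OF assms partial_transpose_carrier] sum_lessThan_4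
  by (simp add: partial_transpose_group2_state_entries)
    (simp add: hermitian2_form_def zeta_plus_def zeta_minus_def Complex_eq algebra_simps)

lemma quadratic_form_partial_transpose_XY:
  assumes "v \<in> carrier_vec 4"
  shows "16 * (conjugate v \<bullet> (partial_transpose (group2_state 1 2 0 0 b0 b1 b2 b3 b4) *\<^sub>v v)) =
    hermitian2_form (1 + b0) (zeta_plus b1 b2 b3 b4)
      (v$0 + \<i> * v$1 + v$2 + \<i> * v$3) (\<i> * v$0 + v$1 - \<i> * v$2 - v$3) +
    hermitian2_form (1 - b0) (zeta_minus b1 b2 b3 b4)
      (v$0 - \<i> * v$1 + v$2 - \<i> * v$3) (\<i> * v$0 - v$1 - \<i> * v$2 + v$3)"
  unfolding quadratic_form_eq_sum[OF assms partial_transpose_carrier] sum_lessThan_4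
  by (simp add: partial_transpose_group2_state_entries)
    (simp add: hermitian2_form_def zeta_plus_def zeta_minus_def Complex_eq algebra_simps)

lemma quadratic_form_partial_transpose_XZ:
  assumes "v \<in> carrier_vec 4"
  shows "16 * (conjugate v \<bullet> (partial_transpose (group2_state 1 3 0 0 b0 b1 b2 b3 b4) *\<^sub>v v)) =
    hermitian2_form (1 + b0) (zeta_plus b1 b2 b3 b4)
      ((-1 - \<i>) * v$0 + (-1 - \<i>) * v$2) ((1 - \<i>) * v$1 + (-1 + \<i>) * v$3) +
    hermitian2_form (1 - b0) (zeta_minus b1 b2 b3 b4)
      ((-1 - \<i>) * v$1 + (-1 - \<i>) * v$3) ((1 - \<i>) * v$0 + (-1 + \<i>) * v$2)"
  unfolding quadratic_form_eq_sum[OF assms partial_transpose_carrier] sum_lessThan_4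
  by (simp add: partial_transpose_group2_state_entries)
    (simp add: hermitian2_form_def zeta_plus_def zeta_minus_def Complex_eq algebra_simps)

lemma quadratic_form_partial_transpose_YX:
  assumes "v \<in> carrier_vec 4"
  shows "16 * (conjugate v \<bullet> (partial_transpose (group2_state 2 1 0 0 b0 b1 b2 b3 b4) *\<^sub>v v)) =
    hermitian2_form (1 + b0) (zeta_plus b1 b2 b3 b4)
      (- v$0 - v$1 + \<i> * v$2 + \<i> * v$3) (\<i> * v$0 - \<i> * v$1 - v$2 + v$3) +
    hermitian2_form (1 - b0) (zeta_minus b1 b2 b3 b4)
      (- \<i> * v$0 + \<i> * v$1 - v$2 + v$3) (v$0 + v$1 + \<i> * v$2 + \<i> * v$3)"
  unfolding quadratic_form_eq_sum[OF assms partial_transpose_carrier] sum_lessThan_4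
  by (simp add: partial_transpose_group2_state_entries)
    (simp add: hermitian2_form_def zeta_plus_def zeta_minus_def Complex_eq algebra_simps)

lemma quadratic_form_partial_transpose_YY:
  assumes "v \<in> carrier_vec 4"
  shows "16 * (conjugate v \<bullet> (partial_transpose (group2_state 2 2 0 0 b0 b1 b2 b3 b4) *\<^sub>v v)) =
    hermitian2_form (1 + b0) (zeta_plus b1 b2 b3 b4)
      (- \<i> * v$0 + v$1 - v$2 - \<i> * v$3) (- \<i> * v$0 - v$1 + v$2 - \<i> * v$3) +
    hermitian2_form (1 - b0) (zeta_minus b1 b2 b3 b4)
      (- \<i> * v$0 - v$1 - v$2 + \<i> * v$3) (- \<i> * v$0 + v$1 + v$2 + \<i> * v$3)"
  unfolding quadratic_form_eq_sum[OF assms partial_transpose_carrier] sum_lessThan_4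
  by (simp add: partial_transpose_group2_state_entries)
    (simp add: hermitian2_form_def zeta_plus_def zeta_minus_def Complex_eq algebra_simps)

lemma quadratic_form_partial_transpose_YZ:
  assumes "v \<in> carrier_vec 4"
  shows "16 * (conjugate v \<bullet> (partial_transpose (group2_state 2 3 0 0 b0 b1 b2 b3 b4) *\<^sub>v v)) =
    hermitian2_form (1 + b0) (zeta_plus b1 b2 b3 b4)
      ((1 - \<i>) * v$0 + (-1 - \<i>) * v$2) ((1 - \<i>) * v$1 + (1 + \<i>) * v$3) +
    hermitian2_form (1 - b0) (zeta_minus b1 b2 b3 b4)
      ((1 - \<i>) * v$1 + (-1 - \<i>) * v$3) ((1 - \<i>) * v$0 + (1 + \<i>) * v$2)"
  unfolding quadratic_form_eq_sum[OF assms partial_transpose_carrier] sum_lessThan_4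
  by (simp add: partial_transpose_group2_state_entries)
    (simp add: hermitian2_form_def zeta_plus_def zeta_minus_def Complex_eq algebra_simps)

lemma quadratic_form_partial_transpose_ZX:
  assumes "v \<in> carrier_vec 4"
  shows "16 * (conjugate v \<bullet> (partial_transpose (group2_state 3 1 0 0 b0 b1 b2 b3 b4) *\<^sub>v v)) =
    hermitian2_form (1 + b0) (zeta_plus b1 b2 b3 b4)
      ((-1 - \<i>) * v$0 + (-1 - \<i>) * v$1) ((-1 + \<i>) * v$2 + (1 - \<i>) * v$3) +
    hermitian2_form (1 - b0) (zeta_minus b1 b2 b3 b4)
      ((1 - \<i>) * v$0 + (-1 + \<i>) * v$1) ((1 + \<i>) * v$2 + (1 + \<i>) * v$3)"
  unfolding quadratic_form_eq_sum[OF assms partial_transpose_carrier] sum_lessThan_4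
  by (simp add: partial_transpose_group2_state_entries)
    (simp add: hermitian2_form_def zeta_plus_def zeta_minus_def Complex_eq algebra_simps)

lemma quadratic_form_partial_transpose_ZY:
  assumes "v \<in> carrier_vec 4"
  shows "16 * (conjugate v \<bullet> (partial_transpose (group2_state 3 2 0 0 b0 b1 b2 b3 b4) *\<^sub>v v)) =
    hermitian2_form (1 + b0) (zeta_plus b1 b2 b3 b4)
      ((1 - \<i>) * v$0 + (1 + \<i>) * v$1) ((1 - \<i>) * v$2 + (-1 - \<i>) * v$3) +
    hermitian2_form (1 - b0) (zeta_minus b1 b2 b3 b4)
      ((1 - \<i>) * v$0 + (-1 - \<i>) * v$1) ((1 - \<i>) * v$2 + (1 + \<i>) * v$3)"
  unfolding quadratic_form_eq_sum[OF assms partial_transpose_carrier] sum_lessThan_4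
  by (simp add: partial_transpose_group2_state_entries)
    (simp add: hermitian2_form_def zeta_plus_def zeta_minus_def Complex_eq algebra_simps)

lemma quadratic_form_partial_transpose_ZZ:
  assumes "v \<in> carrier_vec 4"
  shows "16 * (conjugate v \<bullet> (partial_transpose (group2_state 3 3 0 0 b0 b1 b2 b3 b4) *\<^sub>v v)) =
    hermitian2_form (1 + b0) (zeta_plus b1 b2 b3 b4)
      (2 * v$0) (2 * v$3) +
    hermitian2_form (1 - b0) (zeta_minus b1 b2 b3 b4)
      (2 * v$1) (2 * v$2)"
  unfolding quadratic_form_eq_sum[OF assms partial_transpose_carrier] sum_lessThan_4
  by (simp add: partial_transpose_group2_state_entries)
    (simp add: hermitian2_form_def zeta_plus_def zeta_minus_def Complex_eq algebra_simps)

lemmas quadratic_form_partial_transpose_cases =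
  quadratic_form_partial_transpose_XX quadratic_form_partial_transpose_XY
  quadratic_form_partial_transpose_XZ quadratic_form_partial_transpose_YX
  quadratic_form_partial_transpose_YY quadratic_form_partial_transpose_YZ
  quadratic_form_partial_transpose_ZX quadratic_form_partial_transpose_ZY
  quadratic_form_partial_transpose_ZZ

lemma quadratic_form_partial_transpose_group2_state:
  assumes "a \<in> {1, 2, 3}" "b \<in> {1, 2, 3}" "v \<in> carrier_vec 4"
  shows "\<exists>p q r s.
    16 * (conjugate v \<bullet> (partial_transpose (group2_state a b 0 0 b0 b1 b2 b3 b4) *\<^sub>v v)) =
    hermitian2_form (1 + b0) (zeta_plus b1 b2 b3 b4) p q +
    hermitian2_form (1 - b0) (zeta_minus b1 b2 b3 b4) r s"
proof -
  from assms(1,2) consider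
      "a = 1" "b = 1" | "a = 1" "b = 2" | "a = 1" "b = 3"
    | "a = 2" "b = 1" | "a = 2" "b = 2" | "a = 2" "b = 3"
    | "a = 3" "b = 1" | "a = 3" "b = 2" | "a = 3" "b = 3"
    by blast
  then show ?thesis
    by cases (simp only:, intro exI, rule quadratic_form_partial_transpose_cases[OF assms(3)])+
qed

lemma psd_partial_transpose_group2_state:
  assumes "a \<in> {1, 2, 3}" "b \<in> {1, 2, 3}"
    and "Lplus b1 b2 b3 b4 \<le> 1 + b0" "Lminus b1 b2 b3 b4 \<le> 1 - b0"
  shows "psd (partial_transpose (group2_state a b 0 0 b0 b1 b2 b3 b4))"
proof (rule psdI[OF partial_transpose_carrier])
  let ?R = "group2_state a b 0 0 b0 b1 b2 b3 b4"
  show "hermitian (partial_transpose ?R)"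
    by (intro hermitian_partial_transpose hermitian_group2_state group2_state_carrier)
  fix v :: "complex vec"
  assume "v \<in> carrier_vec 4"
  then obtain p q r s where form_eq:
    "16 * (conjugate v \<bullet> (partial_transpose ?R *\<^sub>v v)) =
     hermitian2_form (1 + b0) (zeta_plus b1 b2 b3 b4) p q +
     hermitian2_form (1 - b0) (zeta_minus b1 b2 b3 b4) r s"
    using quadratic_form_partial_transpose_group2_state[OF assms(1,2)] by blast
  have "0 \<le> hermitian2_form (1 + b0) (zeta_plus b1 b2 b3 b4) p q +
      hermitian2_form (1 - b0) (zeta_minus b1 b2 b3 b4) r s"
    using assms(3,4)
    by (intro add_nonneg_nonneg hermitian2_form_nonneg) (simp_all add: cmod_zeta_plus cmod_zeta_minus)
  then show "0 \<le> conjugate v \<bullet> (partial_transpose ?R *\<^sub>v v)"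
    unfolding form_eq[symmetric] by (simp add: less_eq_complex_def)
qed

theorem proposition1:
  fixes a b :: nat and b0 b1 b2 b3 b4 :: real and R :: "complex mat"
  assumes "a \<in> {1, 2, 3}" and "b \<in> {1, 2, 3}"
    and "R = group2_state a b 0 0 b0 b1 b2 b3 b4"
    and "typeI R b0 b1 b2 b3 b4"
    and "valid_state R"
    and "entangled R"
  shows "b0 < 0 \<longleftrightarrow> Lplus b1 b2 b3 b4 > Lminus b1 b2 b3 b4"
proof -
  let ?Lp = "Lplus b1 b2 b3 b4" and ?Lm = "Lminus b1 b2 b3 b4"
  have R: "R \<in> carrier_mat 4 4" "psd R"
    using assms(5) unfolding valid_state_def by auto
  have "has_eigenvalues R (image_mset complex_of_real
      {# (1 + b0 + ?Lm)/4, (1 + b0 - ?Lm)/4, (1 - b0 + ?Lp)/4, (1 - b0 - ?Lp)/4 #})"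
    using assms(4) unfolding typeI_def Let_def by simp
  then have "0 \<le> complex_of_real ((1 + b0 - ?Lm)/4)" "0 \<le> complex_of_real ((1 - b0 - ?Lp)/4)"
    by (auto intro!: eigenvalue_nonneg_if_psd[OF R(2,1)] eigenvalue_if_has_eigenvalues[OF R(1)])
  then have "?Lm \<le> 1 + b0" "?Lp \<le> 1 - b0"
    by (simp_all add: less_eq_complex_def)
  moreover have "\<not> (?Lp \<le> 1 + b0 \<and> ?Lm \<le> 1 - b0)"
    using psd_partial_transpose_group2_state[OF assms(1,2)] assms(3,6) unfolding entangled_def by blast
  ultimately show ?thesis
    by linarith
qed

end
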